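(* Let $\mathbb{F}$ be a field, $n\ge 1$, and $d=2d'$ an even positive integer. Let $X^1,\dots,X^d$ be pairwise disjoint sets of variables $X^i=\{x^i_{jk}:j,k\in[n]\}$, $X=\bigcup_iX^i$, and $A^i$ the $n\times n$ matrix with $(j,k)$ entry $x^i_{jk}$. Let $B$ be the bijection from $X$ onto $Y\cup Z$ that maps each variable $x^{2i-1}_{jk}$ of an odd-numbered matrix to a distinct variable $y^{2i-1}_{jk}\in Y$ and each variable $x^{2i}_{jk}$ of an even-numbered matrix to a distinct variable $z^{2i}_{jk}\in Z$. Let $f_{ij}$ be the $(i,j)$ entry of $\prod_{k\in[d]}A^k$. Then: (1) for all $i,j\in[n]$, $\mathrm{rank}(M_{f_{ij}^B})=n^{d-1}$; (2) for any $i\in[n]$ and $j\neq j'\in[n]$, the sets of non-zero columns of $M_{f_{ij}^B}$ and $M_{f_{ij'}^B}$ are disjoint.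
   Context: $f^B$ denotes $f$ with each $x$ replaced by $B(x)$. For $g\in\mathbb{F}[Y,Z]$, the polynomial coefficient matrix $M_g$ has rows indexed by monic multilinear monomials $p$ in $Y$ and columns by monic multilinear monomials $q$ in $Z$, with $M_g(p,q)=G$ iff $g=pq\,G+Q$ uniquely with $G$ containing only variables present in $p,q$ and $Q$ having no monomial divisible by $pq$ that contains only variables present in $p,q$. For multilinear $g$ (as here) the entries of $M_g$ are field constants, namely $M_g(p,q)$ is the coefficient of $pq$ in $g$. *)

theory Defs
  imports "HOL-Library.Poly_Mapping" "HOL-Library.Product_Lexorder" "Jordan_Normal_Form.DL_Rank"
begin

(* Multivariate polynomials over a field in variables of type 'v:
   ('v \<Rightarrow>\<^sub>0 nat) \<Rightarrow>\<^sub>0 'a   (monomial = exponent vector, polynomial = finitely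
   supported coefficient function; multiplication is convolution). *)
type_synonym ('v,'a) mpoly = "('v \<Rightarrow>\<^sub>0 nat) \<Rightarrow>\<^sub>0 'a"

definition mvar :: "'v \<Rightarrow> ('v,'a::comm_ring_1) mpoly" where
  "mvar v = Poly_Mapping.single (Poly_Mapping.single v 1) 1"

definition mconst :: "'a::comm_ring_1 \<Rightarrow> ('v,'a) mpoly" where
  "mconst c = Poly_Mapping.single 0 c"

definition rename_vars :: "('v \<Rightarrow> 'w) \<Rightarrow> ('v,'a::comm_ring_1) mpoly \<Rightarrow> ('w,'a) mpoly" where
  "rename_vars B f =
     (\<Sum>m\<in>Poly_Mapping.keys f. mconst (Poly_Mapping.lookup f m) *
          (\<Prod>v\<in>Poly_Mapping.keys m. mvar (B v) ^ Poly_Mapping.lookup m v))"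

(* n x n matrices with entries in a ring, as functions on indices 0..n-1 *)
definition matmul :: "nat \<Rightarrow> (nat \<Rightarrow> nat \<Rightarrow> 'b::comm_ring_1) \<Rightarrow> (nat \<Rightarrow> nat \<Rightarrow> 'b)
                      \<Rightarrow> (nat \<Rightarrow> nat \<Rightarrow> 'b)" where
  "matmul n P Q = (\<lambda>j k. \<Sum>l<n. P j l * Q l k)"

definition idmat :: "nat \<Rightarrow> nat \<Rightarrow> 'b::comm_ring_1" where
  "idmat j k = (if j = k then 1 else 0)"

(* The X-variables: x^i_{jk} is (i,j,k), i \<in> {1..d}, j,k \<in> {0..<n} *)
type_synonym xvar = "nat \<times> nat \<times> nat"

definition Amat :: "nat \<Rightarrow> nat \<Rightarrow> nat \<Rightarrow> (xvar,'a::comm_ring_1) mpoly" where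
  "Amat i j k = mvar (i, j, k)"

definition fentry :: "nat \<Rightarrow> nat \<Rightarrow> nat \<Rightarrow> nat \<Rightarrow> (xvar,'a::comm_ring_1) mpoly" where
  "fentry n d j k = foldr (\<lambda>t acc. matmul n (Amat t) acc) [1..<d+1] idmat j k"

(* Y \<union> Z variables: (True,i,j,k) = y^i_{jk} (i odd), (False,i,j,k) = z^i_{jk} (i even) *)
type_synonym yzvar = "bool \<times> nat \<times> nat \<times> nat"

definition Bmap :: "xvar \<Rightarrow> yzvar" where
  "Bmap x = (case x of (i, j, k) \<Rightarrow> (odd i, i, j, k))"

definition Xvars :: "nat \<Rightarrow> nat \<Rightarrow> xvar set" where
  "Xvars n d = {(i, j, k). i \<in> {1..d} \<and> j < n \<and> k < n}"

definition Yvars :: "nat \<Rightarrow> nat \<Rightarrow> yzvar set" where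
  "Yvars n d = Bmap ` {(i, j, k). i \<in> {1..d} \<and> odd i \<and> j < n \<and> k < n}"

definition Zvars :: "nat \<Rightarrow> nat \<Rightarrow> yzvar set" where
  "Zvars n d = Bmap ` {(i, j, k). i \<in> {1..d} \<and> even i \<and> j < n \<and> k < n}"

definition mlmonos :: "'v set \<Rightarrow> ('v \<Rightarrow>\<^sub>0 nat) set" where
  "mlmonos V = {m. Poly_Mapping.keys m \<subseteq> V \<and> (\<forall>v. Poly_Mapping.lookup m v \<le> 1)}"

definition pcm_entry :: "('v,'a::comm_ring_1) mpoly \<Rightarrow> ('v \<Rightarrow>\<^sub>0 nat) \<Rightarrow> ('v \<Rightarrow>\<^sub>0 nat) \<Rightarrow> 'a" where
  "pcm_entry g p q = Poly_Mapping.lookup g (p + q)"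

(* M_g as a JNF matrix: rows = monic multilinear monomials in Yv, columns = those in Zv,
   both listed in increasing order (rank does not depend on the order). *)
definition pcm :: "'v::linorder set \<Rightarrow> 'v set \<Rightarrow> ('v,'a::comm_ring_1) mpoly \<Rightarrow> 'a mat" where
  "pcm Yv Zv g =
     (let rs = sorted_list_of_set (mlmonos Yv); cs = sorted_list_of_set (mlmonos Zv)
      in mat (length rs) (length cs) (\<lambda>(a, b). pcm_entry g (rs ! a) (cs ! b)))"

definition mat_rank :: "'a::field mat \<Rightarrow> nat" where
  "mat_rank M = vec_space.rank (dim_row M) M"

(* the set of (indices of) non-zero columns of M_g, identified by their monomial q *)
definition nonzero_cols :: "'v set \<Rightarrow> 'v set \<Rightarrow> ('v,'a::comm_ring_1) mpoly \<Rightarrow> ('v \<Rightarrow>\<^sub>0 nat) set" where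
  "nonzero_cols Yv Zv g = {q \<in> mlmonos Zv. \<exists>p \<in> mlmonos Yv. pcm_entry g p q \<noteq> 0}"

end

theory Submission
  imports Defs
begin

text \<open>Expanding the matrix product, f_ij is the sum, over all paths
i = l_0, l_1, ..., l_d = j in [n], of the monomials x^1_{l_0 l_1} x^2_{l_1 l_2} ... x^d_{l_{d-1} l_d},
all distinct and with coefficient 1. Under B each such monomial splits into its Y-part
(the odd-numbered factors) times its Z-part (the even-numbered ones), so M_{f_ij^B} has a 1 in
row Y-part and column Z-part of every path and zeros elsewhere. Since d is even, the Z-part
mentions every vertex l_1, ..., l_d, so it determines the path, including its endpoint j;
the Y-part mentions l_0, ..., l_{d-1} and with the fixed endpoint j also determines the path.
Hence M_{f_ij^B} is a partial permutation matrix with n^{d-1} ones, and the columns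
belonging to different endpoints j are different.\<close>

context
  fixes A :: "'a::field mat" and nr nc :: nat and S :: "(nat \<times> nat) set"
  assumes A: "A \<in> carrier_mat nr nc"
    and S: "S \<subseteq> {..<nr} \<times> {..<nc}" "inj_on fst S" "inj_on snd S"
    and A_entry: "\<And>a b. a < nr \<Longrightarrow> b < nc \<Longrightarrow> A $$ (a, b) = (if (a, b) \<in> S then 1 else 0)"
begin

lemma col_matching_mat: "(a, b) \<in> S \<Longrightarrow> col A b = unit_vec nr a"
proof (rule eq_vecI)
  assume ab: "(a, b) \<in> S"
  then have "a < nr" "b < nc" using S(1) by auto
  fix i assume "i < dim_vec (unit_vec nr a)"
  then have i: "i < nr" by simp
  have "(i, b) \<in> S \<longleftrightarrow> i = a" using ab inj_onD[OF S(3), of "(i, b)" "(a, b)"] by auto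
  then show "col A b $ i = unit_vec nr a $ i" using A A_entry i \<open>a < nr\<close> \<open>b < nc\<close> by simp
qed (use A in simp)

lemma col_matching_mat_zero: "b < nc \<Longrightarrow> b \<notin> snd ` S \<Longrightarrow> col A b = 0\<^sub>v nr"
  by (rule eq_vecI) (use A A_entry in \<open>auto simp: image_iff\<close>)

lemma set_cols_matching_mat:
  "set (cols A) \<subseteq> insert (0\<^sub>v nr) (unit_vec nr ` fst ` S)"
  "unit_vec nr ` fst ` S \<subseteq> set (cols A)"
proof
  fix v assume "v \<in> set (cols A)"
  then obtain b where b: "b < nc" "v = col A b" using A by (auto simp: cols_def)
  show "v \<in> insert (0\<^sub>v nr) (unit_vec nr ` fst ` S)"
  proof (cases "b \<in> snd ` S")
    case True
    then obtain a where ab: "(a, b) \<in> S" by force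
    then show ?thesis using b col_matching_mat[OF ab] by force
  qed (use b col_matching_mat_zero in simp)
next
  show "unit_vec nr ` fst ` S \<subseteq> set (cols A)"
  proof
    fix v :: "'a vec" assume "v \<in> unit_vec nr ` fst ` S"
    then obtain a b where ab: "(a, b) \<in> S" "v = unit_vec nr a" by auto
    then have "v = col A b" using col_matching_mat[OF ab(1)] by simp
    then show "v \<in> set (cols A)" using ab S(1) A by (auto simp: cols_def)
  qed
qed

text \<open>The nonzero columns are distinct unit vectors, one for each element of S.\<close>

lemma rank_matching_mat: "vec_space.rank nr A = card S"
proof -
  interpret vec_space "TYPE('a)" nr .
  define U :: "'a vec set" where "U = unit_vec nr ` fst ` S"
  have "card U = card (fst ` S)"
    unfolding U_def by (rule card_image) (use S(1) in \<open>auto simp: inj_on_def unit_vec_eq\<close>)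
  also have "\<dots> = card S" by (rule card_image[OF S(2)])
  finally have card_U: "card U = card S" .
  have U_indpt: "lin_indpt U"
    by (rule subset_li_is_li[of "set (unit_vecs nr)"])
      (use unit_vecs_basis S(1) in \<open>auto simp: basis_def U_def unit_vecs_def\<close>)
  have "maximal U (\<lambda>T. T \<subseteq> set (cols A) \<and> lin_indpt T)"
    unfolding maximal_def
  proof (intro conjI allI impI)
    fix T assume T: "U \<subseteq> T \<and> T \<subseteq> set (cols A) \<and> lin_indpt T"
    then have "0\<^sub>v nr \<notin> T" using A cols_dim vs_zero_lin_dep[of T] by blast
    then show "T = U" using T set_cols_matching_mat(1) by (auto simp: U_def)
  qed (use set_cols_matching_mat(2) U_indpt in \<open>simp_all add: U_def\<close>)
  then show ?thesis using rank_card_indpt[OF A] card_U by simp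
qed

end

lemma bij_betw_nth_pairs:
  assumes "distinct rs" "distinct cs" "P \<subseteq> set rs \<times> set cs"
  shows "bij_betw (map_prod ((!) rs) ((!) cs))
           {(a, b). a < length rs \<and> b < length cs \<and> (rs ! a, cs ! b) \<in> P} P"
proof (rule bij_betw_imageI)
  show "inj_on (map_prod ((!) rs) ((!) cs)) {(a, b). a < length rs \<and> b < length cs \<and> (rs ! a, cs ! b) \<in> P}"
    using assms(1,2) by (auto simp: inj_on_def nth_eq_iff_index_eq)
  show "map_prod ((!) rs) ((!) cs) ` {(a, b). a < length rs \<and> b < length cs \<and> (rs ! a, cs ! b) \<in> P} = P"
  proof
    show "P \<subseteq> map_prod ((!) rs) ((!) cs) ` {(a, b). a < length rs \<and> b < length cs \<and> (rs ! a, cs ! b) \<in> P}"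
    proof
      fix x assume x: "x \<in> P"
      then obtain a b where "a < length rs" "b < length cs" "x = (rs ! a, cs ! b)"
        using assms(3) by (metis in_set_conv_nth mem_Sigma_iff subsetD surj_pair)
      then show "x \<in> map_prod ((!) rs) ((!) cs) ` {(a, b). a < length rs \<and> b < length cs \<and> (rs ! a, cs ! b) \<in> P}"
        using x by (intro image_eqI[where x = "(a, b)"]) simp_all
    qed
  qed auto
qed

lemma finite_mlmonos: "finite V \<Longrightarrow> finite (mlmonos V)"
proof -
  assume "finite V"
  have "inj_on Poly_Mapping.keys (mlmonos V)"
  proof (rule inj_onI)
    fix m m' assume m: "m \<in> mlmonos V" "m' \<in> mlmonos V" "Poly_Mapping.keys m = Poly_Mapping.keys m'"
    show "m = m'"
    proof (rule poly_mapping_eqI)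
      fix v
      have "Poly_Mapping.lookup m v \<le> 1" "Poly_Mapping.lookup m' v \<le> 1"
        using m by (auto simp: mlmonos_def)
      moreover have "Poly_Mapping.lookup m v = 0 \<longleftrightarrow> Poly_Mapping.lookup m' v = 0"
        using m(3) by (metis in_keys_iff)
      ultimately show "Poly_Mapping.lookup m v = Poly_Mapping.lookup m' v" by linarith
    qed
  qed
  moreover have "Poly_Mapping.keys ` mlmonos V \<subseteq> Pow V" by (auto simp: mlmonos_def)
  ultimately show ?thesis using \<open>finite V\<close> by (meson finite_Pow_iff inj_on_finite)
qed

lemma mat_rank_pcm_matching:
  fixes g :: "('v::linorder, 'a::field) mpoly"
  assumes "finite Yv" "finite Zv"
    and P: "P \<subseteq> mlmonos Yv \<times> mlmonos Zv" "inj_on fst P" "inj_on snd P"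
    and g: "\<And>p q. p \<in> mlmonos Yv \<Longrightarrow> q \<in> mlmonos Zv \<Longrightarrow>
              pcm_entry g p q = (if (p, q) \<in> P then 1 else 0)"
  shows "mat_rank (pcm Yv Zv g) = card P"
proof -
  define rs where "rs = sorted_list_of_set (mlmonos Yv)"
  define cs where "cs = sorted_list_of_set (mlmonos Zv)"
  have "finite (mlmonos Yv)" "finite (mlmonos Zv)"
    using assms(1,2) by (simp_all add: finite_mlmonos)
  then have rs: "set rs = mlmonos Yv" "distinct rs" and cs: "set cs = mlmonos Zv" "distinct cs"
    by (simp_all add: rs_def cs_def)
  let ?h = "map_prod ((!) rs) ((!) cs)"
  define S where "S = {(a, b). a < length rs \<and> b < length cs \<and> (rs ! a, cs ! b) \<in> P}"
  have bij: "bij_betw ?h S P"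
    unfolding S_def by (rule bij_betw_nth_pairs) (use rs cs P(1) in simp_all)
  have M: "pcm Yv Zv g \<in> carrier_mat (length rs) (length cs)"
    by (simp add: pcm_def rs_def cs_def Let_def)
  have M_entry: "pcm Yv Zv g $$ (a, b) = (if (a, b) \<in> S then 1 else 0)"
    if "a < length rs" "b < length cs" for a b
  proof -
    have "rs ! a \<in> mlmonos Yv" "cs ! b \<in> mlmonos Zv" using that rs(1) cs(1) nth_mem by blast+
    then show ?thesis using that g by (simp add: S_def pcm_def Let_def flip: rs_def cs_def)
  qed
  have "inj_on ((!) rs \<circ> fst) S" "inj_on ((!) cs \<circ> snd) S"
    using comp_inj_on[OF bij_betw_imp_inj_on[OF bij], of fst]
      comp_inj_on[OF bij_betw_imp_inj_on[OF bij], of snd] P(2,3) bij_betw_imp_surj_on[OF bij]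
    by simp_all
  then have "inj_on fst S" "inj_on snd S" using inj_on_imageI2 by blast+
  moreover have "S \<subseteq> {..<length rs} \<times> {..<length cs}" by (auto simp: S_def)
  ultimately have "vec_space.rank (length rs) (pcm Yv Zv g) = card S"
    using rank_matching_mat[OF M _ _ _ M_entry] by blast
  then show ?thesis using M bij_betw_same_card[OF bij] by (simp add: mat_rank_def)
qed

lemma nonzero_cols_matching:
  fixes g :: "('v, 'a::comm_ring_1) mpoly"
  assumes P: "P \<subseteq> mlmonos Yv \<times> mlmonos Zv"
    and g: "\<And>p q. p \<in> mlmonos Yv \<Longrightarrow> q \<in> mlmonos Zv \<Longrightarrow>
              pcm_entry g p q = (if (p, q) \<in> P then 1 else 0)"
  shows "nonzero_cols Yv Zv g = snd ` P"
proof (intro equalityI subsetI)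
  fix q assume "q \<in> nonzero_cols Yv Zv g"
  then obtain p where pq: "p \<in> mlmonos Yv" "q \<in> mlmonos Zv" "pcm_entry g p q \<noteq> 0"
    unfolding nonzero_cols_def by blast
  then have "(p, q) \<in> P" using g[OF pq(1,2)] by (simp split: if_splits)
  then show "q \<in> snd ` P" by (rule image_eqI[rotated]) simp
next
  fix q assume "q \<in> snd ` P"
  then obtain p where pq: "(p, q) \<in> P" by auto
  then have "p \<in> mlmonos Yv" "q \<in> mlmonos Zv" using P by auto
  then show "q \<in> nonzero_cols Yv Zv g" using pq g unfolding nonzero_cols_def by auto
qed

definition map_domain :: "('a \<Rightarrow> 'b) \<Rightarrow> ('a \<Rightarrow>\<^sub>0 'c::comm_monoid_add) \<Rightarrow> 'b \<Rightarrow>\<^sub>0 'c" where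
  "map_domain h f = (\<Sum>x\<in>Poly_Mapping.keys f. Poly_Mapping.single (h x) (Poly_Mapping.lookup f x))"

lemma map_domain_eq_sum_superset:
  assumes "finite K" "Poly_Mapping.keys f \<subseteq> K"
  shows "map_domain h f = (\<Sum>x\<in>K. Poly_Mapping.single (h x) (Poly_Mapping.lookup f x))"
  unfolding map_domain_def
  by (rule sum.mono_neutral_left) (use assms in \<open>auto simp: in_keys_iff\<close>)

lemma map_domain_zero: "map_domain h 0 = 0"
  by (simp add: map_domain_def)

lemma map_domain_add: "map_domain h (f + g) = map_domain h f + map_domain h g"
proof -
  let ?K = "Poly_Mapping.keys f \<union> Poly_Mapping.keys g"
  show ?thesis
    by (simp add: map_domain_eq_sum_superset[of ?K] keys_add lookup_add single_add sum.distrib)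
qed

lemma map_domain_sum: "map_domain h (\<Sum>x\<in>A. f x) = (\<Sum>x\<in>A. map_domain h (f x))"
  by (induction A rule: infinite_finite_induct) (simp_all add: map_domain_zero map_domain_add)

lemma map_domain_single: "map_domain h (Poly_Mapping.single x c) = Poly_Mapping.single (h x) c"
  by (cases "c = 0") (simp_all add: map_domain_def)

lemma prod_mvar_power:
  "(\<Prod>x\<in>A. (mvar (v x) :: ('w, 'a::comm_ring_1) mpoly) ^ e x)
     = Poly_Mapping.single (\<Sum>x\<in>A. Poly_Mapping.single (v x) (e x)) 1"
proof -
  have mvar_power: "(mvar w :: ('w, 'a) mpoly) ^ k = Poly_Mapping.single (Poly_Mapping.single w k) 1"
    for w k
    by (induction k) (simp_all add: mvar_def mult_single single_add[symmetric] add.commute)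
  show ?thesis
    by (induction A rule: infinite_finite_induct) (simp_all add: mvar_power mult_single)
qed

lemma prod_mvar:
  "(\<Prod>x\<in>A. (mvar (v x) :: ('w, 'a::comm_ring_1) mpoly))
     = Poly_Mapping.single (\<Sum>x\<in>A. Poly_Mapping.single (v x) 1) 1"
  using prod_mvar_power[of v "\<lambda>_. 1" A] by simp

lemma rename_vars_eq_map_domain: "rename_vars B f = map_domain (map_domain B) f"
  unfolding rename_vars_def map_domain_def prod_mvar_power mconst_def mult_single by simp

lemma rename_vars_sum_single:
  "rename_vars B (\<Sum>x\<in>A. Poly_Mapping.single (m x) c) = (\<Sum>x\<in>A. Poly_Mapping.single (map_domain B (m x)) c)"
  by (simp add: rename_vars_eq_map_domain map_domain_sum map_domain_single)

lemma lookup_sum_single_inj_on: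
  assumes "finite A" "inj_on h A"
  shows "Poly_Mapping.lookup (\<Sum>x\<in>A. Poly_Mapping.single (h x) c) m = (if m \<in> h ` A then c else 0)"
proof (cases "m \<in> h ` A")
  case True
  then obtain x0 where x0: "x0 \<in> A" "m = h x0" by blast
  have "Poly_Mapping.lookup (\<Sum>x\<in>A. Poly_Mapping.single (h x) c) m = (\<Sum>x\<in>A. if x = x0 then c else 0)"
    unfolding lookup_sum lookup_single
    by (rule sum.cong) (use x0 assms(2) in \<open>auto simp: inj_on_def when_def\<close>)
  then show ?thesis using x0 assms(1) True by simp
qed (auto simp: lookup_sum lookup_single intro!: sum.neutral)

lemma add_eq_add_on_disjoint_keys:
  fixes p q p' q' :: "'a \<Rightarrow>\<^sub>0 'b::monoid_add"
  assumes "p + q = p' + q'" "Y \<inter> Z = {}"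
    and "Poly_Mapping.keys p \<subseteq> Y" "Poly_Mapping.keys p' \<subseteq> Y"
    and "Poly_Mapping.keys q \<subseteq> Z" "Poly_Mapping.keys q' \<subseteq> Z"
  shows "p = p'" "q = q'"
proof -
  have sum_eq: "Poly_Mapping.lookup p v + Poly_Mapping.lookup q v
      = Poly_Mapping.lookup p' v + Poly_Mapping.lookup q' v" for v
    using assms(1) by (metis lookup_add)
  have outside: "Poly_Mapping.lookup m v = 0" if "Poly_Mapping.keys m \<subseteq> V" "v \<notin> V"
    for m :: "'a \<Rightarrow>\<^sub>0 'b" and v V
    using that by (meson in_keys_iff subsetD)
  have "Poly_Mapping.lookup p v = Poly_Mapping.lookup p' v
      \<and> Poly_Mapping.lookup q v = Poly_Mapping.lookup q' v" for v
  proof (cases "v \<in> Y")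
    case True
    then have "v \<notin> Z" using assms(2) by blast
    then show ?thesis using sum_eq[of v] outside[OF assms(5)] outside[OF assms(6)] by simp
  next
    case False
    then show ?thesis using sum_eq[of v] outside[OF assms(3)] outside[OF assms(4)] by simp
  qed
  then show "p = p'" "q = q'" by (simp_all add: poly_mapping_eqI)
qed

definition paths :: "nat \<Rightarrow> nat \<Rightarrow> nat \<Rightarrow> nat \<Rightarrow> nat list set" where
  "paths n L a b = {ls. length ls = L \<and> set ls \<subseteq> {..<n} \<and> last (a # ls) = b}"

lemma finite_paths: "finite (paths n L a b)"
  by (rule finite_subset[OF _ finite_lists_length_eq[of "{..<n}" L]]) (auto simp: paths_def)

lemma paths_Suc: "paths n (Suc L) a b = (\<lambda>(l, ls). l # ls) ` (SIGMA l:{..<n}. paths n L l b)"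
proof
  show "paths n (Suc L) a b \<subseteq> (\<lambda>(l, ls). l # ls) ` (SIGMA l:{..<n}. paths n L l b)"
  proof
    fix ls assume "ls \<in> paths n (Suc L) a b"
    then show "ls \<in> (\<lambda>(l, ls). l # ls) ` (SIGMA l:{..<n}. paths n L l b)"
      by (cases ls) (auto simp: paths_def)
  qed
qed (auto simp: paths_def)

lemma card_paths:
  assumes "b < n" "0 < L"
  shows "card (paths n L a b) = n ^ (L - 1)"
proof -
  have "paths n L a b = (\<lambda>ms. ms @ [b]) ` {ms. set ms \<subseteq> {..<n} \<and> length ms = L - 1}"
  proof
    show "paths n L a b \<subseteq> (\<lambda>ms. ms @ [b]) ` {ms. set ms \<subseteq> {..<n} \<and> length ms = L - 1}"
    proof
      fix ls assume ls: "ls \<in> paths n L a b"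
      then have "ls = butlast ls @ [b]" using assms(2) by (auto simp: paths_def)
      moreover have "set (butlast ls) \<subseteq> {..<n}" using ls by (auto simp: paths_def dest: in_set_butlastD)
      ultimately show "ls \<in> (\<lambda>ms. ms @ [b]) ` {ms. set ms \<subseteq> {..<n} \<and> length ms = L - 1}"
        using ls by (auto simp: paths_def intro!: image_eqI[where x = "butlast ls"])
    qed
  qed (use assms in \<open>auto simp: paths_def\<close>)
  moreover have "inj (\<lambda>ms. ms @ [b])" by (auto simp: inj_on_def)
  ultimately show ?thesis
    by (simp add: card_image inj_on_subset[of _ UNIV] card_lists_length_eq)
qed

lemma foldr_matmul_eq_sum_paths:
  fixes M :: "'c \<Rightarrow> nat \<Rightarrow> nat \<Rightarrow> 'a::comm_ring_1"
  shows "foldr (\<lambda>t acc. matmul n (M t) acc) ts idmat a b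
    = (\<Sum>ls\<in>paths n (length ts) a b. \<Prod>r<length ts. M (ts ! r) ((a # ls) ! r) ((a # ls) ! Suc r))"
proof (induction ts arbitrary: a)
  case Nil
  then show ?case by (simp add: paths_def idmat_def)
next
  case (Cons t ts)
  let ?w = "\<lambda>a ls. \<Prod>r<length (t # ts). M ((t # ts) ! r) ((a # ls) ! r) ((a # ls) ! Suc r)"
  have "foldr (\<lambda>t acc. matmul n (M t) acc) (t # ts) idmat a b
      = (\<Sum>l<n. M t a l * foldr (\<lambda>t acc. matmul n (M t) acc) ts idmat l b)"
    by (simp add: matmul_def)
  also have "\<dots> = (\<Sum>l<n. \<Sum>ls\<in>paths n (length ts) l b. ?w a (l # ls))"
    by (simp add: Cons.IH sum_distrib_left prod.lessThan_Suc_shift del: prod.lessThan_Suc)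
  also have "\<dots> = (\<Sum>(l, ls)\<in>(SIGMA l:{..<n}. paths n (length ts) l b). ?w a (l # ls))"
    by (rule sum.Sigma) (auto simp: finite_paths)
  also have "\<dots> = (\<Sum>ls\<in>paths n (length (t # ts)) a b. ?w a ls)"
    unfolding paths_Suc length_Cons
    by (subst sum.reindex) (auto simp: inj_on_def case_prod_beta)
  finally show ?case .
qed

lemma finite_Yvars: "finite (Yvars n d)"
  by (rule finite_subset[of _ "Bmap ` ({1..d} \<times> {..<n} \<times> {..<n})"]) (auto simp: Yvars_def)

lemma finite_Zvars: "finite (Zvars n d)"
  by (rule finite_subset[of _ "Bmap ` ({1..d} \<times> {..<n} \<times> {..<n})"]) (auto simp: Zvars_def)

lemma Yvars_Zvars_disjoint: "Yvars n d \<inter> Zvars n d = {}"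
  by (auto simp: Yvars_def Zvars_def Bmap_def)

definition edge_var :: "nat \<Rightarrow> nat list \<Rightarrow> nat \<Rightarrow> yzvar" where
  "edge_var a ls r = Bmap (Suc r, (a # ls) ! r, (a # ls) ! Suc r)"

definition edge_monom :: "nat \<Rightarrow> nat list \<Rightarrow> nat set \<Rightarrow> yzvar \<Rightarrow>\<^sub>0 nat" where
  "edge_monom a ls R = (\<Sum>r\<in>R. Poly_Mapping.single (edge_var a ls r) 1)"

text \<open>Edge r of a path is a variable of the matrix A^{r+1}, so the even-numbered edges
carry the y-variables.\<close>

definition y_part :: "nat \<Rightarrow> nat \<Rightarrow> nat list \<Rightarrow> yzvar \<Rightarrow>\<^sub>0 nat" where
  "y_part d a ls = edge_monom a ls {r. r < d \<and> even r}"

definition z_part :: "nat \<Rightarrow> nat \<Rightarrow> nat list \<Rightarrow> yzvar \<Rightarrow>\<^sub>0 nat" where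
  "z_part d a ls = edge_monom a ls {r. r < d \<and> odd r}"

lemma inj_on_edge_var: "inj_on (edge_var a ls) R"
  by (auto simp: inj_on_def edge_var_def Bmap_def)

lemma lookup_edge_monom:
  "finite R \<Longrightarrow> Poly_Mapping.lookup (edge_monom a ls R) v = (if v \<in> edge_var a ls ` R then 1 else 0)"
  unfolding edge_monom_def by (rule lookup_sum_single_inj_on[OF _ inj_on_edge_var])

lemma keys_edge_monom: "finite R \<Longrightarrow> Poly_Mapping.keys (edge_monom a ls R) = edge_var a ls ` R"
  by (auto simp: in_keys_iff lookup_edge_monom split: if_splits)

lemma edge_monom_eqD:
  assumes "finite R" "edge_monom a ls R = edge_monom a ls' R" "r \<in> R"
  shows "(a # ls) ! r = (a # ls') ! r" "(a # ls) ! Suc r = (a # ls') ! Suc r"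
proof -
  have "edge_var a ls r \<in> edge_var a ls' ` R" using assms keys_edge_monom by (metis imageI)
  then show "(a # ls) ! r = (a # ls') ! r" "(a # ls) ! Suc r = (a # ls') ! Suc r"
    by (auto simp: edge_var_def Bmap_def)
qed

lemma edge_monom_lessThan_inj:
  assumes "length ls = d" "length ls' = d" "edge_monom a ls {..<d} = edge_monom a ls' {..<d}"
  shows "ls = ls'"
proof (rule nth_equalityI)
  fix k assume "k < length ls"
  then show "ls ! k = ls' ! k" using edge_monom_eqD(2)[OF _ assms(3), of k] assms(1) by simp
qed (use assms in simp)

lemma edge_monom_lessThan_split: "edge_monom a ls {..<d} = y_part d a ls + z_part d a ls"
proof -
  have "{..<d} = {r. r < d \<and> even r} \<union> {r. r < d \<and> odd r}" by auto
  then show ?thesis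
    unfolding y_part_def z_part_def edge_monom_def by (simp only:) (rule sum.union_disjoint, auto)
qed

lemma y_part_inj:
  assumes "length ls = d" "length ls' = d" "last (a # ls) = last (a # ls')"
    and "y_part d a ls = y_part d a ls'"
  shows "ls = ls'"
proof (rule nth_equalityI)
  let ?R = "{r. r < d \<and> even r}"
  have eqD: "(a # ls) ! r = (a # ls') ! r" "(a # ls) ! Suc r = (a # ls') ! Suc r" if "r \<in> ?R" for r
    using edge_monom_eqD[of ?R a ls ls' r] that assms(4) by (simp_all add: y_part_def)
  fix k assume k: "k < length ls"
  consider "even k" | "odd k" "Suc k < d" | "Suc k = d" using k assms(1) by fastforce
  then show "ls ! k = ls' ! k"
  proof cases
    case 1
    then show ?thesis using eqD(2)[of k] k assms(1) by simp
  next
    case 2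
    then show ?thesis using eqD(1)[of "Suc k"] by simp
  next
    case 3
    then show ?thesis using assms(1-3) by (metis diff_Suc_1 last_ConsR last_conv_nth list.size(3) nat.distinct(1))
  qed
qed (use assms in simp)

lemma z_part_inj:
  assumes "even d" "length ls = d" "length ls' = d" "z_part d a ls = z_part d a ls'"
  shows "ls = ls'"
proof (rule nth_equalityI)
  let ?R = "{r. r < d \<and> odd r}"
  have eqD: "(a # ls) ! r = (a # ls') ! r" "(a # ls) ! Suc r = (a # ls') ! Suc r" if "r \<in> ?R" for r
    using edge_monom_eqD[of ?R a ls ls' r] that assms(4) by (simp_all add: z_part_def)
  fix k assume k: "k < length ls"
  show "ls ! k = ls' ! k"
  proof (cases "odd k")
    case True
    then show ?thesis using eqD(2)[of k] k assms(2) by simp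
  next
    case False
    then have "Suc k < d" using k assms(1,2) by (metis Suc_lessI even_Suc odd_pos)
    then show ?thesis using eqD(1)[of "Suc k"] False by simp
  qed
qed (use assms in simp)

lemma y_part_z_part_mlmonos:
  assumes "set (a # ls) \<subseteq> {..<n}" "length ls = d"
  shows "y_part d a ls \<in> mlmonos (Yvars n d)" "z_part d a ls \<in> mlmonos (Zvars n d)"
proof -
  have node: "(a # ls) ! r < n" if "r \<le> d" for r
  proof -
    have "(a # ls) ! r \<in> set (a # ls)" using that assms(2) by (intro nth_mem) simp
    then show ?thesis using assms(1) by blast
  qed
  have edge: "(Suc r, (a # ls) ! r, (a # ls) ! Suc r)
      \<in> {(i, j, k). i \<in> {1..d} \<and> (odd i \<longleftrightarrow> even r) \<and> j < n \<and> k < n}" if "r < d" for r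
    using that node[of r] node[of "Suc r"] by simp
  have "edge_var a ls ` {r. r < d \<and> even r} \<subseteq> Yvars n d"
    and "edge_var a ls ` {r. r < d \<and> odd r} \<subseteq> Zvars n d"
    unfolding Yvars_def Zvars_def edge_var_def using edge by (force intro!: imageI)+
  then show "y_part d a ls \<in> mlmonos (Yvars n d)" "z_part d a ls \<in> mlmonos (Zvars n d)"
    by (simp_all add: mlmonos_def y_part_def z_part_def keys_edge_monom lookup_edge_monom)
qed

lemma rename_fentry:
  "rename_vars Bmap (fentry n d a b :: (xvar, 'a::comm_ring_1) mpoly)
     = (\<Sum>ls\<in>paths n d a b. Poly_Mapping.single (edge_monom a ls {..<d}) 1)"
proof -
  let ?v = "\<lambda>ls r. (Suc r, (a # ls) ! r, (a # ls) ! Suc r)"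
  have "fentry n d a b = (\<Sum>ls\<in>paths n d a b. \<Prod>r<d. (mvar (?v ls r) :: (xvar, 'a) mpoly))"
    unfolding fentry_def foldr_matmul_eq_sum_paths length_upt
    by (intro sum.cong refl prod.cong) (simp_all add: Amat_def del: upt_Suc)
  also have "\<dots> = (\<Sum>ls\<in>paths n d a b. Poly_Mapping.single (\<Sum>r<d. Poly_Mapping.single (?v ls r) 1) 1)"
    by (simp only: prod_mvar)
  finally show ?thesis
    by (simp add: rename_vars_sum_single map_domain_sum map_domain_single edge_monom_def edge_var_def)
qed

definition path_parts :: "nat \<Rightarrow> nat \<Rightarrow> nat \<Rightarrow> nat \<Rightarrow> ((yzvar \<Rightarrow>\<^sub>0 nat) \<times> (yzvar \<Rightarrow>\<^sub>0 nat)) set" where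
  "path_parts n d a b = (\<lambda>ls. (y_part d a ls, z_part d a ls)) ` paths n d a b"

lemma path_parts_subset:
  "a < n \<Longrightarrow> path_parts n d a b \<subseteq> mlmonos (Yvars n d) \<times> mlmonos (Zvars n d)"
  unfolding path_parts_def paths_def using y_part_z_part_mlmonos by auto

lemma inj_on_y_part_paths: "inj_on (y_part d a) (paths n d a b)"
proof (rule inj_onI)
  fix ls ls' assume "ls \<in> paths n d a b" "ls' \<in> paths n d a b" "y_part d a ls = y_part d a ls'"
  then show "ls = ls'" by (intro y_part_inj[of ls d ls' a]) (simp_all add: paths_def)
qed

lemma inj_on_z_part_paths: "even d \<Longrightarrow> inj_on (z_part d a) (paths n d a b)"
  by (rule inj_onI) (simp add: paths_def z_part_inj)

lemma inj_on_fst_path_parts: "inj_on fst (path_parts n d a b)"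
  unfolding path_parts_def by (rule inj_on_imageI) (simp add: comp_def inj_on_y_part_paths)

lemma inj_on_snd_path_parts: "even d \<Longrightarrow> inj_on snd (path_parts n d a b)"
  unfolding path_parts_def by (rule inj_on_imageI) (simp add: comp_def inj_on_z_part_paths)

lemma card_path_parts: "even d \<Longrightarrow> card (path_parts n d a b) = card (paths n d a b)"
  unfolding path_parts_def
  by (rule card_image) (use inj_on_z_part_paths in \<open>auto simp: inj_on_def\<close>)

lemma pcm_entry_rename_fentry:
  assumes "a < n" "p \<in> mlmonos (Yvars n d)" "q \<in> mlmonos (Zvars n d)"
  shows "pcm_entry (rename_vars Bmap (fentry n d a b :: (xvar, 'a::comm_ring_1) mpoly)) p q
     = (if (p, q) \<in> path_parts n d a b then 1 else 0)"
proof -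
  let ?m = "\<lambda>ls. edge_monom a ls {..<d}"
  have "inj_on ?m (paths n d a b)"
    by (rule inj_onI) (simp add: paths_def edge_monom_lessThan_inj)
  then have "pcm_entry (rename_vars Bmap (fentry n d a b :: (xvar, 'a) mpoly)) p q
      = (if p + q \<in> ?m ` paths n d a b then 1 else 0)"
    unfolding pcm_entry_def rename_fentry by (rule lookup_sum_single_inj_on[OF finite_paths])
  also have "p + q \<in> ?m ` paths n d a b \<longleftrightarrow> (p, q) \<in> path_parts n d a b"
  proof
    assume "p + q \<in> ?m ` paths n d a b"
    then obtain ls where ls: "ls \<in> paths n d a b" "p + q = y_part d a ls + z_part d a ls"
      by (auto simp: edge_monom_lessThan_split)
    have "(y_part d a ls, z_part d a ls) \<in> mlmonos (Yvars n d) \<times> mlmonos (Zvars n d)"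
      using path_parts_subset[OF assms(1)] ls(1) by (auto simp: path_parts_def)
    then have "p = y_part d a ls" "q = z_part d a ls"
      using add_eq_add_on_disjoint_keys[OF ls(2) Yvars_Zvars_disjoint] assms(2,3)
      by (auto simp: mlmonos_def)
    then show "(p, q) \<in> path_parts n d a b" using ls(1) by (auto simp: path_parts_def)
  qed (auto simp: path_parts_def edge_monom_lessThan_split)
  finally show ?thesis .
qed

lemma mat_rank_pcm_rename_fentry:
  assumes "even d" "0 < d" "a < n" "b < n"
  shows "mat_rank (pcm (Yvars n d) (Zvars n d) (rename_vars Bmap (fentry n d a b :: (xvar, 'a::field) mpoly)))
    = n ^ (d - 1)"
proof -
  have "mat_rank (pcm (Yvars n d) (Zvars n d) (rename_vars Bmap (fentry n d a b :: (xvar, 'a) mpoly)))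
      = card (path_parts n d a b)"
    by (rule mat_rank_pcm_matching[OF finite_Yvars finite_Zvars path_parts_subset[OF assms(3)]
          inj_on_fst_path_parts inj_on_snd_path_parts[OF assms(1)] pcm_entry_rename_fentry[OF assms(3)]])
  then show ?thesis using card_path_parts[OF assms(1)] card_paths[OF assms(4,2)] by simp
qed

lemma nonzero_cols_rename_fentry:
  assumes "a < n"
  shows "nonzero_cols (Yvars n d) (Zvars n d) (rename_vars Bmap (fentry n d a b :: (xvar, 'a::comm_ring_1) mpoly))
    = z_part d a ` paths n d a b"
  using nonzero_cols_matching[OF path_parts_subset[OF assms] pcm_entry_rename_fentry[OF assms]]
  by (simp add: path_parts_def image_image)

lemma z_part_paths_disjoint:
  assumes "even d" "b \<noteq> b'"
  shows "z_part d a ` paths n d a b \<inter> z_part d a ` paths n d a b' = {}"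
proof -
  have False if "ls \<in> paths n d a b" "ls' \<in> paths n d a b'" "z_part d a ls = z_part d a ls'"
    for ls ls'
  proof -
    have "ls = ls'" using that z_part_inj[OF assms(1)] by (simp add: paths_def)
    then show False using that(1,2) assms(2) by (simp add: paths_def)
  qed
  then show ?thesis by blast
qed

theorem lemma12:
  fixes n d' :: nat
  assumes "n \<ge> 1" and "d' \<ge> 1"
  defines "d \<equiv> 2 * d'"
  shows "(\<forall>i<n. \<forall>j<n.
            mat_rank (pcm (Yvars n d) (Zvars n d)
                        (rename_vars Bmap (fentry n d i j :: (xvar,'a::field) mpoly))) = n ^ (d - 1))
       \<and> (\<forall>i<n. \<forall>j<n. \<forall>j'<n. j \<noteq> j' \<longrightarrow>
            nonzero_cols (Yvars n d) (Zvars n d) (rename_vars Bmap (fentry n d i j :: (xvar,'a) mpoly))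
            \<inter> nonzero_cols (Yvars n d) (Zvars n d) (rename_vars Bmap (fentry n d i j' :: (xvar,'a) mpoly))
            = {})"
proof -
  have d: "even d" "0 < d" using assms(2) unfolding d_def by auto
  show ?thesis
  proof (intro conjI allI impI)
    fix i j assume "i < n" "j < n"
    then show "mat_rank (pcm (Yvars n d) (Zvars n d)
                 (rename_vars Bmap (fentry n d i j :: (xvar,'a) mpoly))) = n ^ (d - 1)"
      by (rule mat_rank_pcm_rename_fentry[OF d])
  next
    fix i j j' assume "i < n" "j < n" "j' < n" "j \<noteq> j'"
    then show "nonzero_cols (Yvars n d) (Zvars n d) (rename_vars Bmap (fentry n d i j :: (xvar,'a) mpoly))
        \<inter> nonzero_cols (Yvars n d) (Zvars n d) (rename_vars Bmap (fentry n d i j' :: (xvar,'a) mpoly))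
        = {}"
      by (simp only: nonzero_cols_rename_fentry) (rule z_part_paths_disjoint[OF d(1)])
  qed
qed

end
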